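(* Let $\mathcal E\subset\mathcal L^n$ contain all balls and let $\diamond,\heartsuit\in\mathcal J(\mathcal E)$ with associated contractions $\psi_{\diamond,r},\psi_{\heartsuit,r}$. For all $x\in\mathbb{R}^n$ and $r>0$ with $(\diamond B(x,r))\cap\heartsuit B(x,r)\neq\emptyset$, $$\|\psi_{\diamond,r}(x)-\psi_{\heartsuit,r}(x)\|\le\frac{n}{2r^{n-1}\kappa_{n-1}}\,\|1_{\diamond B(x,r)}-1_{\heartsuit B(x,r)}\|_1,$$ where $\kappa_{n-1}$ is the volume of the unit ball in $\mathbb{R}^{n-1}$.
   Context: $\mathcal L^n$: measurable subsets of $\mathbb{R}^n$ of finite measure. $\mathcal J(\mathcal E)$: maps $\diamond:\mathcal E\to\mathcal L^n$ that are monotonic up to null sets, measure preserving, and map (essential) balls to (essential) balls. The associated contractions $\psi_{\diamond,r}$ are defined by $\diamond B(x,r)=B(\psi_{\diamond,r}(x),r)$ (closed balls, up to null sets). *)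

theory Defs
  imports "HOL-Analysis.Analysis"
begin

definition Ln :: "'a::euclidean_space set set" where
  "Ln = {A. A \<in> sets lebesgue \<and> emeasure lebesgue A < \<infinity>}"

definition ae_eq_set :: "'a::euclidean_space set \<Rightarrow> 'a set \<Rightarrow> bool" where
  "ae_eq_set A B \<longleftrightarrow> (A - B) \<union> (B - A) \<in> null_sets lebesgue"

definition J :: "'a::euclidean_space set set \<Rightarrow> ('a set \<Rightarrow> 'a set) set" where
  "J E = {d. (\<forall>A\<in>E. d A \<in> Ln)
           \<and> (\<forall>A\<in>E. \<forall>B\<in>E. A \<subseteq> B \<longrightarrow> d A - d B \<in> null_sets lebesgue)
           \<and> (\<forall>A\<in>E. emeasure lebesgue (d A) = emeasure lebesgue A)
           \<and> (\<forall>A\<in>E. \<forall>x r. r > 0 \<and> ae_eq_set A (cball x r) \<longrightarrow>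
                 (\<exists>y s. s > 0 \<and> ae_eq_set (d A) (cball y s)))}"

definition assoc_contraction :: "('a::euclidean_space set \<Rightarrow> 'a set) \<Rightarrow> (real \<Rightarrow> 'a \<Rightarrow> 'a) \<Rightarrow> bool" where
  "assoc_contraction d psi \<longleftrightarrow> (\<forall>x r. r > 0 \<longrightarrow> ae_eq_set (d (cball x r)) (cball (psi r x) r))"

end

theory Submission
  imports Defs
begin

(* Up to null sets, d B(x,r) and h B(x,r) are the balls B(a,r) and B(b,r) with centres
  a = psid r x and b = psih r x. They overlap in positive measure, so |a - b| <= 2r, and the
  L1 distance of the indicators is |B(a,r) - B(b,r)| + |B(b,r) - B(a,r)|.
  Each of these is at least t/(2r) |B(0,r)| with t = |a - b|: sweep the ball along a segment
  s u, 0 <= s <= L, in the direction u of b - a and compute the volume of the swept set in two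
  ways. Every line y + R u meets B(s u, r) in a chord of length 2h <= 2r, and the shift by t
  removes a piece of length min(t, 2h) >= t h / r from it, except for lines through the two
  end balls, which contribute an error independent of L. Dividing by L and letting L go to
  infinity gives the estimate. The constant then follows from 2 kappa_(n-1) <= n kappa_n,
  proved by induction using kappa_(m+2) = 2 pi / (m+2) kappa_m. *)

lemma unit_ball_vol_add_two:
  assumes "m \<ge> 0"
  shows "unit_ball_vol (m + 2) = 2 * pi / (m + 2) * unit_ball_vol m"
proof -
  have "m / 2 + 1 \<notin> \<int>\<^sub>\<le>\<^sub>0"
    using assms nonpos_Ints_nonpos by fastforce
  then have Gamma_step: "Gamma ((m + 2) / 2 + 1) = (m / 2 + 1) * Gamma (m / 2 + 1)"
    using Gamma_plus1[of "m / 2 + 1"] by (simp add: add_divide_distrib add.assoc)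
  have pi_step: "pi powr ((m + 2) / 2) = pi * pi powr (m / 2)"
    by (simp add: add_divide_distrib powr_add)
  have "Gamma (m / 2 + 1) > 0"
    using assms by (intro Gamma_real_pos) simp
  then show ?thesis
    using assms unfolding unit_ball_vol_def Gamma_step pi_step by (simp add: field_simps)
qed

lemma unit_ball_vol_pred_le:
  assumes "n \<ge> 1"
  shows "2 * unit_ball_vol (real (n - 1)) \<le> real n * unit_ball_vol (real n)"
  using assms
proof (induction n rule: less_induct)
  case (less n)
  show ?case
  proof (cases "n \<le> 2")
    case True
    with less.prems have "n = 1 \<or> n = 2" by auto
    then show ?thesis using unit_ball_vol_2 pi_gt3 by auto
  next
    case False
    define m where "m = n - 2"
    have n: "n = m + 2" "m \<ge> 1" using False m_def by auto
    have IH: "2 * unit_ball_vol (real (m - 1)) \<le> real m * unit_ball_vol (real m)"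
      using less.IH n by simp
    have pred: "unit_ball_vol (real (n - 1)) = 2 * pi / (real m + 1) * unit_ball_vol (real (m - 1))"
      using unit_ball_vol_add_two[of "real (m - 1)"] n by (simp add: of_nat_diff)
    have succ: "real n * unit_ball_vol (real n) = 2 * pi * unit_ball_vol (real m)"
      using unit_ball_vol_add_two[of "real m"] n by (simp add: add.commute)
    have "2 * unit_ball_vol (real (m - 1)) \<le> (real m + 1) * unit_ball_vol (real m)"
      by (rule order_trans[OF IH mult_right_mono]) auto
    then have "2 * pi / (real m + 1) * (2 * unit_ball_vol (real (m - 1)))
        \<le> 2 * pi / (real m + 1) * ((real m + 1) * unit_ball_vol (real m))"
      by (rule mult_left_mono) simp
    also have "\<dots> = real n * unit_ball_vol (real n)"
      using succ by simp
    finally show ?thesis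
      using pred by simp
  qed
qed

text \<open>If the line misses the ball, the radicand is negative and so is its square root,
  so both sides are false.\<close>

lemma norm_diff_scaleR_unit_le_iff:
  fixes y u :: "'a::real_inner"
  assumes "norm u = 1" and "r \<ge> 0"
  shows "norm (y - s *\<^sub>R u) \<le> r \<longleftrightarrow> \<bar>s - y \<bullet> u\<bar> \<le> sqrt (r\<^sup>2 - ((norm y)\<^sup>2 - (y \<bullet> u)\<^sup>2))"
proof -
  have "u \<bullet> u = 1"
    using assms(1) by (simp add: dot_square_norm)
  then have norm_sq: "(norm (y - s *\<^sub>R u))\<^sup>2 = ((norm y)\<^sup>2 - (y \<bullet> u)\<^sup>2) + (s - y \<bullet> u)\<^sup>2"
    unfolding power2_norm_eq_inner
    by (simp add: inner_diff_left inner_diff_right inner_commute power2_eq_square algebra_simps)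
  have norm_le: "norm (y - s *\<^sub>R u) \<le> r \<longleftrightarrow> (norm (y - s *\<^sub>R u))\<^sup>2 \<le> r\<^sup>2"
    using assms(2) by (simp add: abs_le_square_iff[symmetric])
  have abs_le_sqrt: "\<bar>s - y \<bullet> u\<bar> \<le> sqrt w \<longleftrightarrow> (s - y \<bullet> u)\<^sup>2 \<le> w" for w
    by (metis real_sqrt_abs real_sqrt_le_iff)
  show ?thesis
    unfolding norm_le abs_le_sqrt norm_sq by linarith
qed

lemma emeasure_chord_shift_ge:
  fixes a h t r L :: real
  assumes r: "0 < r" "h \<le> r" and t: "0 < t" "t \<le> 2 * r"
  shows "ennreal (t / (2 * r)) * emeasure lborel {s \<in> {0..L}. \<bar>s - a\<bar> \<le> h}
    \<le> emeasure lborel {s \<in> {0..L}. \<bar>s - a\<bar> \<le> h \<and> \<not> \<bar>s + t - a\<bar> \<le> h}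
      + (if \<bar>a\<bar> \<le> h \<or> \<bar>L - a\<bar> \<le> h then ennreal t else 0)"
    (is "ennreal ?c * emeasure lborel ?S \<le> emeasure lborel ?D + ?err")
proof (cases "?S = {}")
  case True
  then show ?thesis
    by (simp only: emeasure_empty mult_zero_right zero_le)
next
  case False
  then have h: "h \<ge> 0" by auto
  have "emeasure lborel ?S \<le> emeasure lborel {a - h..a + h}"
    by (intro emeasure_mono) auto
  then have "ennreal ?c * emeasure lborel ?S \<le> ennreal ?c * ennreal (2 * h)"
    using h by (intro mult_left_mono) auto
  also have "\<dots> = ennreal (t * h / r)"
    using r t h by (simp add: ennreal_mult[symmetric] field_simps)
  finally have chord: "ennreal ?c * emeasure lborel ?S \<le> ennreal (t * h / r)" .
  have "t * h \<le> t * r" "t * h \<le> (2 * r) * h"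
    using r t h by (simp_all add: mult_left_mono mult_right_mono)
  then have th: "t * h / r \<le> t" "t * h / r \<le> 2 * h"
    using r by (simp_all add: pos_divide_le_eq mult.commute mult.left_commute)
  show ?thesis
  proof (cases "\<bar>a\<bar> \<le> h \<or> \<bar>L - a\<bar> \<le> h")
    case True
    have "ennreal ?c * emeasure lborel ?S \<le> ennreal t"
      using chord th by (meson ennreal_leI order_trans)
    with True show ?thesis
      by (simp add: add_increasing)
  next
    case endpoints_outside: False
    from \<open>?S \<noteq> {}\<close> obtain s where "s \<in> {0..L}" "\<bar>s - a\<bar> \<le> h"
      by blast
    with endpoints_outside have inside: "0 < a - h" "a + h < L"
      by (auto simp: abs_le_iff)
    have "{max (a - h) (a + h - t)<..a + h} \<subseteq> ?D"
      using inside t h by (auto simp: abs_le_iff)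
    note chord
    also have "ennreal (t * h / r) \<le> emeasure lborel {max (a - h) (a + h - t)<..a + h}"
      using th h t by (simp add: ennreal_leI)
    also have "\<dots> \<le> emeasure lborel ?D"
      using \<open>{max (a - h) (a + h - t)<..a + h} \<subseteq> ?D\<close> by (intro emeasure_mono) auto
    also have "\<dots> \<le> emeasure lborel ?D + ?err"
      by (rule add_increasing2) auto
    finally show ?thesis .
  qed
qed

lemma emeasure_lborel_translation:
  fixes c :: "'a::euclidean_space"
  assumes "A \<in> sets borel"
  shows "emeasure lborel ((+) c ` A) = emeasure lborel A"
proof -
  have "emeasure lborel A = emeasure (distr lborel borel ((+) (- c))) A"
    by (simp add: lborel_distr_plus)
  also have "\<dots> = emeasure lborel ((+) (- c) -` A)"
    using assms by (simp add: emeasure_distr)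
  also have "(+) (- c) -` A = (+) c ` A"
    by force
  finally show ?thesis ..
qed

lemma sweep_in_sets_pair_lborel:
  fixes u :: "'a::euclidean_space"
  assumes "A \<in> sets borel"
  shows "{(y, s). s \<in> {0..L} \<and> y - s *\<^sub>R u \<in> A} \<in> sets (lborel \<Otimes>\<^sub>M lborel)"
proof -
  have "(\<lambda>p::'a \<times> real. fst p - snd p *\<^sub>R u) \<in> borel_measurable borel"
    by (intro borel_measurable_continuous_onI continuous_intros)
  then have "{p. fst p - snd p *\<^sub>R u \<in> A} \<in> sets (borel :: ('a \<times> real) measure)"
    using assms by (simp add: measurable_sets_borel)
  moreover have "{p :: 'a \<times> real. 0 \<le> snd p} \<inter> {p. snd p \<le> L} \<in> sets borel"
    by (intro borel_closed closed_Int closed_Collect_le continuous_intros)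
  ultimately have "{p. 0 \<le> snd p} \<inter> {p. snd p \<le> L} \<inter> {p. fst p - snd p *\<^sub>R u \<in> A} \<in> sets borel"
    by blast
  then show ?thesis
    unfolding lborel_prod sets_lborel by (simp add: case_prod_beta' Collect_conj_eq Int_assoc)
qed

lemma borel_measurable_emeasure_sweep:
  fixes u :: "'a::euclidean_space"
  assumes "A \<in> sets borel"
  shows "(\<lambda>y. emeasure lborel {s \<in> {0..L}. y - s *\<^sub>R u \<in> A}) \<in> borel_measurable lborel"
proof -
  have "Pair y -` {(y, s). s \<in> {0..L} \<and> y - s *\<^sub>R u \<in> A} = {s \<in> {0..L}. y - s *\<^sub>R u \<in> A}" for y
    by auto
  then show ?thesis
    using lborel.measurable_emeasure_Pair[OF sweep_in_sets_pair_lborel[OF assms]] by simp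
qed

lemma nn_integral_emeasure_sweep:
  fixes u :: "'a::euclidean_space"
  assumes "A \<in> sets borel" and "0 \<le> L"
  shows "(\<integral>\<^sup>+y. emeasure lborel {s \<in> {0..L}. y - s *\<^sub>R u \<in> A} \<partial>lborel)
    = ennreal L * emeasure lborel A"
proof -
  \<comment> \<open>Slice the swept set along the segment on one side and along the lines on the other.\<close>
  define S where "S = {(y, s). s \<in> {0..L} \<and> y - s *\<^sub>R u \<in> A}"
  have S: "S \<in> sets (lborel \<Otimes>\<^sub>M lborel)"
    unfolding S_def using assms(1) by (rule sweep_in_sets_pair_lborel)
  have "emeasure lborel ((\<lambda>y. (y, s)) -` S) = indicator {0..L} s * emeasure lborel A" for s
  proof -
    have "(\<lambda>y. (y, s)) -` S = (if s \<in> {0..L} then (+) (s *\<^sub>R u) ` A else {})"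
      unfolding S_def by (force simp: algebra_simps)
    then show ?thesis
      using assms(1) by (simp add: emeasure_lborel_translation)
  qed
  then have "emeasure (lborel \<Otimes>\<^sub>M lborel) S = ennreal L * emeasure lborel A"
    using assms(2) by (simp add: lborel_pair.emeasure_pair_measure_alt2[OF S] nn_integral_multc)
  moreover have "emeasure (lborel \<Otimes>\<^sub>M lborel) S = (\<integral>\<^sup>+y. emeasure lborel (Pair y -` S) \<partial>lborel)"
    by (rule lborel.emeasure_pair_measure_alt[OF S])
  moreover have "Pair y -` S = {s \<in> {0..L}. y - s *\<^sub>R u \<in> A}" for y
    unfolding S_def by auto
  ultimately show ?thesis
    by simp
qed

lemma emeasure_chord_cball_shift_ge:
  fixes y u :: "'a::euclidean_space"
  assumes u: "norm u = 1" and r: "0 < r" and t: "0 < t" "t \<le> 2 * r"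
  shows "ennreal (t / (2 * r)) * emeasure lborel {s \<in> {0..L}. y - s *\<^sub>R u \<in> cball 0 r}
    \<le> emeasure lborel {s \<in> {0..L}. y - s *\<^sub>R u \<in> cball 0 r - cball (t *\<^sub>R u) r}
      + ennreal t * indicator (cball 0 r \<union> cball (L *\<^sub>R u) r) y"
proof -
  define a where "a = y \<bullet> u"
  define h where "h = sqrt (r\<^sup>2 - ((norm y)\<^sup>2 - a\<^sup>2))"
  have chord: "y - s *\<^sub>R u \<in> cball 0 r \<longleftrightarrow> \<bar>s - a\<bar> \<le> h" for s
    using norm_diff_scaleR_unit_le_iff[OF u, of r y s] r by (simp add: a_def h_def)
  have shifted: "y - s *\<^sub>R u \<in> cball (t *\<^sub>R u) r \<longleftrightarrow> \<bar>s + t - a\<bar> \<le> h" for s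
  proof -
    have "dist (t *\<^sub>R u) (y - s *\<^sub>R u) = dist 0 (y - (s + t) *\<^sub>R u)"
      by (simp add: dist_norm algebra_simps norm_minus_commute)
    then show ?thesis
      using chord[of "s + t"] by (simp only: mem_cball)
  qed
  have "\<bar>a\<bar> \<le> norm y"
    using Cauchy_Schwarz_ineq2[of y u] u by (simp add: a_def)
  then have "a\<^sup>2 \<le> (norm y)\<^sup>2"
    by (metis abs_le_square_iff abs_norm_cancel)
  then have "h \<le> sqrt (r\<^sup>2)"
    unfolding h_def by (intro real_sqrt_le_mono) linarith
  then have "h \<le> r"
    using r by simp
  have chords: "{s \<in> {0..L}. y - s *\<^sub>R u \<in> cball 0 r} = {s \<in> {0..L}. \<bar>s - a\<bar> \<le> h}"
    using chord by blast
  have shifted_chords: "{s \<in> {0..L}. y - s *\<^sub>R u \<in> cball 0 r - cball (t *\<^sub>R u) r}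
      = {s \<in> {0..L}. \<bar>s - a\<bar> \<le> h \<and> \<not> \<bar>s + t - a\<bar> \<le> h}"
    using chord shifted by blast
  have "y \<in> cball 0 r \<union> cball (L *\<^sub>R u) r \<longleftrightarrow> \<bar>a\<bar> \<le> h \<or> \<bar>L - a\<bar> \<le> h"
    using chord[of 0] chord[of L] by (simp add: dist_norm norm_minus_commute)
  then have endpoints: "ennreal t * indicator (cball 0 r \<union> cball (L *\<^sub>R u) r) y
      = (if \<bar>a\<bar> \<le> h \<or> \<bar>L - a\<bar> \<le> h then ennreal t else 0)"
    by (simp add: indicator_def)
  show ?thesis
    unfolding chords shifted_chords endpoints
    using r \<open>h \<le> r\<close> t by (rule emeasure_chord_shift_ge)
qed

lemma emeasure_cball_diff_cball_sweep_ge: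
  fixes u :: "'a::euclidean_space"
  assumes u: "norm u = 1" and r: "0 < r" and t: "0 < t" "t \<le> 2 * r" and L: "0 \<le> L"
  shows "ennreal (t / (2 * r)) * (ennreal L * emeasure lborel (cball (0::'a) r))
    \<le> ennreal L * emeasure lborel (cball 0 r - cball (t *\<^sub>R u) r)
      + ennreal t * (2 * emeasure lborel (cball (0::'a) r))"
proof -
  let ?B = "cball (0::'a) r" and ?D = "cball 0 r - cball (t *\<^sub>R u) r"
    and ?E = "cball 0 r \<union> cball (L *\<^sub>R u) r"
  let ?chord = "\<lambda>A y. emeasure lborel {s \<in> {0..L}. y - s *\<^sub>R u \<in> A}"
  have borel: "?B \<in> sets borel" "?D \<in> sets borel" "?E \<in> sets borel"
    by auto
  have "ennreal (t / (2 * r)) * (ennreal L * emeasure lborel ?B)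
      = ennreal (t / (2 * r)) * (\<integral>\<^sup>+y. ?chord ?B y \<partial>lborel)"
    by (simp only: nn_integral_emeasure_sweep[OF borel(1) L])
  also have "\<dots> = (\<integral>\<^sup>+y. ennreal (t / (2 * r)) * ?chord ?B y \<partial>lborel)"
    using borel by (intro nn_integral_cmult[symmetric] borel_measurable_emeasure_sweep)
  also have "\<dots> \<le> (\<integral>\<^sup>+y. ?chord ?D y + ennreal t * indicator ?E y \<partial>lborel)"
    using u r t by (intro nn_integral_mono emeasure_chord_cball_shift_ge)
  also have "\<dots> = (\<integral>\<^sup>+y. ?chord ?D y \<partial>lborel) + (\<integral>\<^sup>+y. ennreal t * indicator ?E y \<partial>lborel)"
  proof (rule nn_integral_add)
    show "?chord ?D \<in> borel_measurable lborel"
      using borel(2) by (rule borel_measurable_emeasure_sweep)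
    show "(\<lambda>y. ennreal t * indicator ?E y) \<in> borel_measurable lborel"
      using borel(3) by (intro borel_measurable_times_ennreal borel_measurable_const borel_measurable_indicator) simp
  qed
  also have "\<dots> = ennreal L * emeasure lborel ?D + ennreal t * emeasure lborel ?E"
    using borel by (simp only: nn_integral_emeasure_sweep[OF borel(2) L] nn_integral_cmult_indicator sets_lborel)
  also have "emeasure lborel ?E \<le> 2 * emeasure lborel ?B"
  proof -
    have "emeasure lborel ?E \<le> emeasure lborel ?B + emeasure lborel (cball (L *\<^sub>R u) r)"
      by (intro emeasure_subadditive) auto
    also have "emeasure lborel (cball (L *\<^sub>R u) r) = emeasure lborel ?B"
      using r by (simp add: emeasure_cball)
    finally show ?thesis
      by (simp add: mult_2)
  qed
  finally show ?thesis
    by (simp add: add_left_mono mult_left_mono order_trans)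
qed

lemma measure_cball_diff_cball_ge:
  fixes a b :: "'a::euclidean_space"
  assumes r: "0 < r" and ab: "dist a b \<le> 2 * r"
  shows "dist a b / (2 * r) * (unit_ball_vol DIM('a) * r ^ DIM('a))
    \<le> measure lebesgue (cball a r - cball b r)"
proof (cases "a = b")
  case False
  define t where "t = dist a b"
  define u where "u = (b - a) /\<^sub>R t"
  define K where "K = unit_ball_vol DIM('a) * r ^ DIM('a)"
  define m where "m = measure lborel (cball 0 r - cball (t *\<^sub>R u) r)"
  have t: "0 < t" "t \<le> 2 * r"
    using False ab by (simp_all add: t_def)
  have u: "norm u = 1" and tu: "t *\<^sub>R u = b - a"
    using t by (simp_all add: u_def t_def dist_norm norm_minus_commute)
  have K: "0 < K"
    using r by (simp add: K_def)
  have "cball a r - cball b r = (+) a ` (cball 0 r - cball (t *\<^sub>R u) r)"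
    using cball_translation[of a 0 r] cball_translation[of a "b - a" r]
    by (simp add: tu translation_diff)
  then have m_eq: "measure lebesgue (cball a r - cball b r) = m"
    by (simp add: m_def measure_translation measure_completion)
  have B: "emeasure lborel (cball (0::'a) r) = ennreal K"
    using r by (simp add: K_def emeasure_cball)
  have "emeasure lborel (cball 0 r - cball (t *\<^sub>R u) r) \<le> emeasure lborel (cball (0::'a) r)"
    by (intro emeasure_mono) auto
  then have D: "emeasure lborel (cball 0 r - cball (t *\<^sub>R u) r) = ennreal m"
    unfolding m_def B by (intro emeasure_eq_ennreal_measure) (auto simp: top_unique)
  have m: "0 \<le> m"
    by (simp add: m_def)
  have sweep: "t / (2 * r) * L * K \<le> L * m + t * (2 * K)" if L: "0 \<le> L" for L
  proof -
    have "ennreal (t / (2 * r) * L * K) = ennreal (t / (2 * r)) * (ennreal L * ennreal K)"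
      using t r L K by (simp add: ennreal_mult[symmetric] mult.assoc del: ennreal_mult)
    also have "\<dots> \<le> ennreal L * ennreal m + ennreal t * (2 * ennreal K)"
      using emeasure_cball_diff_cball_sweep_ge[OF u r t L] unfolding B D .
    also have "\<dots> = ennreal (L * m + t * (2 * K))"
      using t L K m by (simp add: ennreal_mult)
    finally show ?thesis
      using t L K m by (subst (asm) ennreal_le_iff) auto
  qed
  have "t / (2 * r) * K \<le> m"
  proof (rule field_le_epsilon) \<comment> \<open>let the sweep length tend to infinity\<close>
    fix e :: real
    assume e: "0 < e"
    define L where "L = 2 * t * K / e"
    have L: "0 < L"
      using t K e by (simp add: L_def)
    have "L * (t / (2 * r) * K) \<le> L * (m + e)"
      using sweep[of L] L e by (simp add: L_def field_simps)
    then show "t / (2 * r) * K \<le> m + e"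
      using L by (rule mult_left_le_imp_le)
  qed
  then show ?thesis
    by (simp add: m_eq t_def K_def)
qed simp

lemma AE_ae_eq_set:
  assumes "ae_eq_set A B"
  shows "AE y in lebesgue. y \<in> A \<longleftrightarrow> y \<in> B"
  using AE_not_in[OF assms[unfolded ae_eq_set_def]] by eventually_elim blast

lemma integral_abs_indicator_diff:
  assumes "A \<in> sets M" "B \<in> sets M" "emeasure M A < \<infinity>" "emeasure M B < \<infinity>"
  shows "(\<integral>y. \<bar>indicator A y - indicator B y :: real\<bar> \<partial>M) = measure M (A - B) + measure M (B - A)"
proof -
  have "emeasure M (A - B) < \<infinity>" "emeasure M (B - A) < \<infinity>"
    using assms by (meson Diff_subset emeasure_mono le_less_trans sets.Diff)+
  then have "integrable M (indicator (A - B) :: _ \<Rightarrow> real)" "integrable M (indicator (B - A) :: _ \<Rightarrow> real)"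
    using assms by (simp_all add: integrable_indicator_iff sets.Diff)
  moreover have "\<bar>indicator A y - indicator B y :: real\<bar> = indicator (A - B) y + indicator (B - A) y" for y
    by (simp add: indicator_def)
  moreover have "(A - B) \<inter> space M = A - B" "(B - A) \<inter> space M = B - A"
    using sets.sets_into_space[OF assms(1)] sets.sets_into_space[OF assms(2)] by auto
  ultimately show ?thesis
    by simp
qed

lemma dist_le_twice_radius_if_ae_cball_overlap:
  fixes a b :: "'a::euclidean_space"
  assumes "AE y in lebesgue. y \<in> A \<longleftrightarrow> y \<in> cball a r" "AE y in lebesgue. y \<in> H \<longleftrightarrow> y \<in> cball b r"
    and "A \<in> sets lebesgue" "H \<in> sets lebesgue" "emeasure lebesgue (A \<inter> H) > 0"
  shows "dist a b \<le> 2 * r"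
proof (rule ccontr)
  assume "\<not> dist a b \<le> 2 * r"
  moreover have "dist a b \<le> 2 * r" if "dist a z \<le> r" "dist b z \<le> r" for z
    using that dist_triangle[of a b z] dist_commute[of z b] by linarith
  ultimately have disjoint: "cball a r \<inter> cball b r = {}"
    by auto
  from assms(1,2) have "AE y in lebesgue. y \<notin> A \<inter> H"
    by eventually_elim (use disjoint in blast)
  then have "A \<inter> H \<in> null_sets lebesgue"
    using AE_iff_null_sets[of "A \<inter> H" lebesgue] assms(3,4) by blast
  with assms(5) show False
    by (simp add: null_setsD1)
qed

lemma integral_abs_indicator_diff_ae_cball_ge:
  fixes a b :: "'a::euclidean_space"
  assumes "AE y in lebesgue. y \<in> A \<longleftrightarrow> y \<in> cball a r" "AE y in lebesgue. y \<in> H \<longleftrightarrow> y \<in> cball b r"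
    and "A \<in> sets lebesgue" "H \<in> sets lebesgue" "emeasure lebesgue (A \<inter> H) > 0" and r: "0 < r"
  shows "dist a b / r * (unit_ball_vol DIM('a) * r ^ DIM('a))
    \<le> (\<integral>y. \<bar>indicator A y - indicator H y\<bar> \<partial>lebesgue)"
proof -
  have ab: "dist a b \<le> 2 * r" "dist b a \<le> 2 * r"
    using dist_le_twice_radius_if_ae_cball_overlap[OF assms(1-5)] by (simp_all add: dist_commute)
  have "(\<integral>y. \<bar>indicator A y - indicator H y :: real\<bar> \<partial>lebesgue)
      = (\<integral>y. \<bar>indicator (cball a r) y - indicator (cball b r) y\<bar> \<partial>lebesgue)"
  proof (rule integral_cong_AE)
    show "AE y in lebesgue. \<bar>indicator A y - indicator H y :: real\<bar>
        = \<bar>indicator (cball a r) y - indicator (cball b r) y\<bar>"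
      using assms(1,2) by eventually_elim (simp add: indicator_def)
    have "cball c r \<in> sets lebesgue" for c :: 'a
      by (simp add: fmeasurableD)
    then show "(\<lambda>y. \<bar>indicator (cball a r) y - indicator (cball b r) y :: real\<bar>) \<in> borel_measurable lebesgue"
      by measurable
  qed (use assms(3,4) in auto)
  also have "\<dots> = measure lebesgue (cball a r - cball b r) + measure lebesgue (cball b r - cball a r)"
    using lmeasurable_cball[of a r] lmeasurable_cball[of b r]
    by (intro integral_abs_indicator_diff) (auto simp: fmeasurable_def)
  finally show ?thesis
    using measure_cball_diff_cball_ge[OF r ab(1)] measure_cball_diff_cball_ge[OF r ab(2)]
    by (simp add: dist_commute field_simps)
qed

lemma J_image_sets:
  assumes "d \<in> J E" and "A \<in> E"
  shows "d A \<in> sets lebesgue"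
  using assms by (auto simp: J_def Ln_def)

lemma AE_assoc_contraction:
  assumes "assoc_contraction d psi" and "0 < r"
  shows "AE y in lebesgue. y \<in> d (cball x r) \<longleftrightarrow> y \<in> cball (psi r x) r"
  using assms by (intro AE_ae_eq_set) (simp add: assoc_contraction_def)

theorem lemma7p3:
  fixes E :: "'a::euclidean_space set set"
    and d h :: "'a set \<Rightarrow> 'a set"
    and psid psih :: "real \<Rightarrow> 'a \<Rightarrow> 'a"
    and x :: 'a and r :: real
  assumes "E \<subseteq> Ln"
    and "\<And>y s. s > 0 \<Longrightarrow> cball y s \<in> E"
    and "d \<in> J E" and "h \<in> J E"
    and "assoc_contraction d psid" and "assoc_contraction h psih"
    and "r > 0"
    and "emeasure lebesgue (d (cball x r) \<inter> h (cball x r)) > 0"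
  shows "norm (psid r x - psih r x)
         \<le> real DIM('a) / (2 * r ^ (DIM('a) - 1) * unit_ball_vol (real (DIM('a) - 1)))
           * (\<integral>y. \<bar>indicator (d (cball x r)) y - indicator (h (cball x r)) y\<bar> \<partial>lebesgue)"
proof -
  define n where "n = DIM('a)"
  define \<delta> where "\<delta> = dist (psid r x) (psih r x)"
  define I where "I = (\<integral>y. \<bar>indicator (d (cball x r)) y - indicator (h (cball x r)) y :: real\<bar> \<partial>lebesgue)"
  note r = \<open>r > 0\<close>
  have n: "1 \<le> n"
    by (simp add: n_def Suc_le_eq)
  have "\<delta> * unit_ball_vol n * r ^ (n - 1) = \<delta> / r * (unit_ball_vol n * r ^ n)"
    using n r by (simp add: power_eq_if)
  also have "\<dots> \<le> I"
    unfolding \<delta>_def I_def n_def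
    using AE_assoc_contraction[OF assms(5) r] AE_assoc_contraction[OF assms(6) r]
      J_image_sets[OF assms(3) assms(2)[OF r]] J_image_sets[OF assms(4) assms(2)[OF r]] assms(8) r
    by (rule integral_abs_indicator_diff_ae_cball_ge)
  finally have I: "\<delta> * unit_ball_vol n * r ^ (n - 1) \<le> I" .
  have "1 \<le> real n * unit_ball_vol n / (2 * unit_ball_vol (real (n - 1)))"
    using unit_ball_vol_pred_le[OF n] by (simp add: le_divide_eq)
  then have "\<delta> * 1 \<le> \<delta> * (real n * unit_ball_vol n / (2 * unit_ball_vol (real (n - 1))))"
    by (rule mult_left_mono) (simp add: \<delta>_def)
  also have "\<dots> = real n / (2 * r ^ (n - 1) * unit_ball_vol (real (n - 1))) * (\<delta> * unit_ball_vol n * r ^ (n - 1))"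
    using r by simp
  also have "\<dots> \<le> real n / (2 * r ^ (n - 1) * unit_ball_vol (real (n - 1))) * I"
    using I r by (intro mult_left_mono) auto
  finally show ?thesis
    by (simp add: \<delta>_def I_def n_def dist_norm)
qed

end
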